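(* Let $\mathcal G$ be a core network with input nodes $\iota_1,\dots,\iota_n$ and output node $o$, fix $m$ with the vestigial subnetwork $\mathcal D_m$ nonempty, and let $\mathcal D_{m,1},\dots,\mathcal D_{m,n_m}$ be the subnetworks associated to the diagonal blocks of the Frobenius–König normal form of $J_{\mathcal D_m}$. Then for every $j=1,\dots,n_m$, $\mathcal D_{m,j}$ contains an $\iota_k$-simple node for some $k\in\{1,\dots,n\}$, $k\neq m$.
   Context: Node $b$ is downstream from $a$ (and $a$ upstream from $b$) if there is a directed path from $a$ to $b$ (every node is up/downstream from itself). $\mathcal G$ is a core network if every node is upstream from $o$ and downstream from at least one input node. $\mathcal G_m$ is the subnetwork of nodes downstream from $\iota_m$ and upstream from $o$; $\mathcal D_m$ consists of the nodes not downstream from $\iota_m$ with all arrows of $\mathcal G$ between them. A simple path visits each node at most once; an $\iota_ko$-simple path is a simple path from $\iota_k$ to $o$; a node is $\iota_k$-simple if it lies on some $\iota_ko$-simple path. Each node $j$ carries a function $f_j$; the partial derivatives $f_{j,x_\ell}$ (one per arrow $\ell\to j$, plus a self-coupling $f_{j,x_j}$ for every node) are independent indeterminates, and $J_{\mathcal K}=(f_{j,x_\ell})_{j,\ell\in\mathcal K}$. By Frobenius–König theory, there are permutation matrices with $P_mJ_{\mathcal D_m}Q_m$ block upper triangular with square fully indecomposable diagonal blocks $D_{m,j}$; each $D_{m,j}$ of order $k_j$ contains exactly $k_j$ self-couplings and after row/column permutation equals $J_{\mathcal D_{m,j}}$ for the set $\mathcal D_{m,j}$ of nodes indexing its rows,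 which (with all arrows between its nodes) is the associated subnetwork. *)

theory Defs
  imports Complex_Main "HOL-Library.Poly_Mapping"
begin

text \<open>A network: finite node set V, arrows E (a pair (a,b) is an arrow a -> b),
  input nodes iota 1, ..., iota n (pairwise distinct) and an output node o (not an input).\<close>

definition io_network ::
  "'a set \<Rightarrow> ('a \<times> 'a) set \<Rightarrow> nat \<Rightarrow> (nat \<Rightarrow> 'a) \<Rightarrow> 'a \<Rightarrow> bool" where
  "io_network V E n iota out \<longleftrightarrow>
     finite V \<and> E \<subseteq> V \<times> V \<and> 1 \<le> n \<and>
     iota ` {1..n} \<subseteq> V \<and> inj_on iota {1..n} \<and> out \<in> V \<and> out \<notin> iota ` {1..n}"

definition downstream :: "('a \<times> 'a) set \<Rightarrow> 'a \<Rightarrow> 'a \<Rightarrow> bool" where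
  "downstream E a b \<longleftrightarrow> (a, b) \<in> E\<^sup>*"

definition core_network ::
  "'a set \<Rightarrow> ('a \<times> 'a) set \<Rightarrow> nat \<Rightarrow> (nat \<Rightarrow> 'a) \<Rightarrow> 'a \<Rightarrow> bool" where
  "core_network V E n iota out \<longleftrightarrow>
     io_network V E n iota out \<and>
     (\<forall>v\<in>V. downstream E v out \<and> (\<exists>k\<in>{1..n}. downstream E (iota k) v))"

definition vestigial :: "'a set \<Rightarrow> ('a \<times> 'a) set \<Rightarrow> (nat \<Rightarrow> 'a) \<Rightarrow> nat \<Rightarrow> 'a set" where
  "vestigial V E iota m = {v \<in> V. \<not> downstream E (iota m) v}"

definition is_path :: "('a \<times> 'a) set \<Rightarrow> 'a list \<Rightarrow> bool" where
  "is_path E xs \<longleftrightarrow> xs \<noteq> [] \<and> (\<forall>i. Suc i < length xs \<longrightarrow> (xs ! i, xs ! Suc i) \<in> E)"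

definition simple_path :: "('a \<times> 'a) set \<Rightarrow> 'a list \<Rightarrow> bool" where
  "simple_path E xs \<longleftrightarrow> is_path E xs \<and> distinct xs"

definition input_simple :: "('a \<times> 'a) set \<Rightarrow> (nat \<Rightarrow> 'a) \<Rightarrow> 'a \<Rightarrow> nat \<Rightarrow> 'a \<Rightarrow> bool" where
  "input_simple E iota out k v \<longleftrightarrow>
     (\<exists>xs. simple_path E xs \<and> hd xs = iota k \<and> last xs = out \<and> v \<in> set xs)"

text \<open>Polynomials over the reals in the indeterminates f_{j,x_l}, indexed by pairs (j,l),
  represented as finitely supported maps from monomials to coefficients.\<close>
type_synonym 'a jpoly = "(('a \<times> 'a) \<Rightarrow>\<^sub>0 nat) \<Rightarrow>\<^sub>0 real"

definition indet :: "'a \<times> 'a \<Rightarrow> 'a jpoly" where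
  "indet v = Poly_Mapping.single (Poly_Mapping.single v 1) 1"

text \<open>J_K = (f_{j,x_l})_{j,l in K}: the entry is the indeterminate f_{j,x_l} if j = l
  (self-coupling) or there is an arrow l -> j, and 0 otherwise.\<close>
definition jacobian :: "('a \<times> 'a) set \<Rightarrow> 'a \<Rightarrow> 'a \<Rightarrow> 'a jpoly" where
  "jacobian E j l = (if j = l \<or> (l, j) \<in> E then indet (j, l) else 0)"

definition fully_indecomposable :: "('r \<Rightarrow> 'c \<Rightarrow> 'z::zero) \<Rightarrow> 'r set \<Rightarrow> 'c set \<Rightarrow> bool" where
  "fully_indecomposable M R C \<longleftrightarrow>
     finite R \<and> finite C \<and> card R = card C \<and> 1 \<le> card R \<and>
     (card R = 1 \<longrightarrow> (\<forall>r\<in>R. \<forall>c\<in>C. M r c \<noteq> 0)) \<and>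
     (\<forall>S T. S \<subseteq> R \<longrightarrow> T \<subseteq> C \<longrightarrow> S \<noteq> {} \<longrightarrow> T \<noteq> {} \<longrightarrow>
            card S + card T = card R \<longrightarrow> (\<exists>s\<in>S. \<exists>t\<in>T. M s t \<noteq> 0))"

text \<open>Frobenius--Koenig normal form of the square matrix (M r c)_{r,c in K}: permutation
  matrices P, Q with P M Q block upper triangular with p square fully indecomposable
  diagonal blocks.\<close>
definition fk_normal_form ::
  "('a \<Rightarrow> 'a \<Rightarrow> 'z::zero) \<Rightarrow> 'a set \<Rightarrow> nat \<Rightarrow> (nat \<Rightarrow> 'a set) \<Rightarrow> (nat \<Rightarrow> 'a set) \<Rightarrow> bool" where
  "fk_normal_form M K p R C \<longleftrightarrow>
     (\<Union>i<p. R i) = K \<and> (\<Union>i<p. C i) = K \<and>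
     (\<forall>i<p. \<forall>i'<p. i \<noteq> i' \<longrightarrow> R i \<inter> R i' = {} \<and> C i \<inter> C i' = {}) \<and>
     (\<forall>i<p. fully_indecomposable M (R i) (C i)) \<and>
     (\<forall>i<p. \<forall>i'<i. \<forall>r\<in>R i. \<forall>c\<in>C i'. M r c = 0)"

end

theory Submission
  imports Defs
begin

(* The self-couplings put a nonzero entry on every diagonal position of J_{D_m}, so in the
   Frobenius-Koenig form every diagonal block has the same row and column set, and block
   triangularity means that arrows between blocks only lead from later to earlier blocks;
   hence two nodes on a common cycle lie in the same block.  Given v in block j, the core
   property yields a walk iota_k -> v -> o, where k <> m because v is not downstream from
   iota_m.  Shortening this walk to a simple path retains a node x on a common cycle with v;
   x is upstream from v, so it lies in D_m, hence in block j, and it is iota_k-simple. *)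

lemma is_path_iff_successively:
  "is_path E xs \<longleftrightarrow> xs \<noteq> [] \<and> successively (\<lambda>x y. (x, y) \<in> E) xs"
  unfolding is_path_def successively_conv_nth by blast

lemma successively_rtrancl:
  "successively (\<lambda>x y. (x, y) \<in> E) xs \<Longrightarrow> xs \<noteq> [] \<Longrightarrow> (hd xs, last xs) \<in> E\<^sup>*"
  by (induction xs rule: induct_list012) auto

lemma simple_path_exists:
  assumes "(a, b) \<in> E\<^sup>*"
  shows "\<exists>xs. simple_path E xs \<and> hd xs = a \<and> last xs = b"
  using assms
proof (induction rule: converse_rtrancl_induct)
  case base
  show ?case
    by (rule exI[of _ "[b]"]) (simp add: simple_path_def is_path_def)
next
  case (step a y)
  then obtain xs where xs: "simple_path E xs" "hd xs = y" "last xs = b"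
    by blast
  then have "xs \<noteq> []"
    by (simp add: simple_path_def is_path_def)
  show ?case
  proof (cases "a \<in> set xs")
    case True
    then obtain us ws where "xs = us @ a # ws"
      by (meson split_list)
    with xs have "simple_path E (a # ws)" "last (a # ws) = b"
      by (auto simp: simple_path_def is_path_iff_successively successively_append_iff)
    then show ?thesis
      by force
  next
    case False
    with xs step(1) have "simple_path E (a # xs)"
      by (cases xs) (auto simp: simple_path_def is_path_iff_successively)
    moreover have "last (a # xs) = b"
      using xs(3) \<open>xs \<noteq> []\<close> by simp
    ultimately show ?thesis
      by force
  qed
qed

(* Cut the walk at the first node x of the first simple path that the second one visits. *)
lemma simple_path_through_cycle:
  assumes "(a, v) \<in> E\<^sup>*" and "(v, b) \<in> E\<^sup>*"
  obtains xs x where "simple_path E xs" "hd xs = a" "last xs = b" "x \<in> set xs"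
    "(x, v) \<in> E\<^sup>*" "(v, x) \<in> E\<^sup>*"
proof -
  obtain xs1 where xs1: "simple_path E xs1" "hd xs1 = a" "last xs1 = v"
    using simple_path_exists[OF assms(1)] by blast
  obtain xs2 where xs2: "simple_path E xs2" "hd xs2 = v" "last xs2 = b"
    using simple_path_exists[OF assms(2)] by blast
  have "xs1 \<noteq> []" "xs2 \<noteq> []"
    using xs1(1) xs2(1) by (simp_all add: simple_path_def is_path_def)
  then have "\<exists>x\<in>set xs1. x \<in> set xs2"
    using xs1(3) xs2(2) by (metis last_in_set hd_in_set)
  then obtain us x rest where xs1_split: "xs1 = us @ x # rest" and "x \<in> set xs2"
    and us_disj: "\<forall>y\<in>set us. y \<notin> set xs2"
    by (rule split_list_first_propE)
  then obtain pre ws where xs2_split: "xs2 = pre @ x # ws"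
    by (meson split_list)
  let ?P = "\<lambda>x y. (x, y) \<in> E"
  have prefix1: "successively ?P (us @ [x])" and suffix1: "successively ?P (x # rest)"
    using xs1(1) unfolding xs1_split simple_path_def is_path_iff_successively
    by (auto simp: successively_append_iff)
  have prefix2: "successively ?P (pre @ [x])" and suffix2: "successively ?P (x # ws)"
    using xs2(1) unfolding xs2_split simple_path_def is_path_iff_successively
    by (auto simp: successively_append_iff)
  have "simple_path E (us @ x # ws)"
    using prefix1 suffix2 xs1(1) xs2(1) us_disj
    unfolding simple_path_def is_path_iff_successively xs1_split xs2_split
    by (auto simp: successively_append_iff)
  moreover have "hd (us @ x # ws) = a"
    using xs1(2) unfolding xs1_split by (cases us) simp_all
  moreover have "last (us @ x # ws) = b"
    using xs2(3) unfolding xs2_split by simp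
  moreover have "(x, v) \<in> E\<^sup>*"
    using successively_rtrancl[OF suffix1] xs1(3) unfolding xs1_split by simp
  moreover have "(v, x) \<in> E\<^sup>*"
    using successively_rtrancl[OF prefix2] xs2(2) unfolding xs2_split by (cases pre) simp_all
  ultimately show ?thesis
    using that[of "us @ x # ws" x] by simp
qed

lemma fk_normal_formD:
  assumes "fk_normal_form M K p R C"
  shows "(\<Union>i<p. R i) = K" "(\<Union>i<p. C i) = K"
    "\<And>i i'. i < p \<Longrightarrow> i' < p \<Longrightarrow> i \<noteq> i' \<Longrightarrow> R i \<inter> R i' = {} \<and> C i \<inter> C i' = {}"
    "\<And>i. i < p \<Longrightarrow> fully_indecomposable M (R i) (C i)"
    "\<And>i i' r c. i' < i \<Longrightarrow> i < p \<Longrightarrow> r \<in> R i \<Longrightarrow> c \<in> C i' \<Longrightarrow> M r c = 0"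
  using assms unfolding fk_normal_form_def by blast+

lemma fk_normal_form_row_block_unique:
  "fk_normal_form M K p R C \<Longrightarrow> i < p \<Longrightarrow> i' < p \<Longrightarrow> x \<in> R i \<Longrightarrow> x \<in> R i' \<Longrightarrow> i = i'"
  using fk_normal_formD(3) by blast

(* Counting shows that the rows and columns of the blocks i >= j form the same set; the block j
   is then the difference of two consecutive such tails. *)
lemma fk_normal_form_rows_eq_cols:
  assumes fk: "fk_normal_form M K p R C" and diag: "\<forall>r\<in>K. M r r \<noteq> 0" and "j < p"
  shows "R j = C j"
proof -
  define row_tail where "row_tail j = (\<Union>i\<in>{j..<p}. R i)" for j
  define col_tail where "col_tail j = (\<Union>i\<in>{j..<p}. C i)" for j
  have fin: "finite (R i)" "finite (C i)" and card_eq: "card (R i) = card (C i)" if "i < p" for i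
    using fk_normal_formD(4)[OF fk that] unfolding fully_indecomposable_def by blast+
  have tails_eq: "row_tail j = col_tail j" for j
  proof (rule card_subset_eq)
    show "finite (col_tail j)"
      unfolding col_tail_def using fin by auto
    show "row_tail j \<subseteq> col_tail j"
    proof
      fix r assume "r \<in> row_tail j"
      then obtain i where i: "j \<le> i" "i < p" "r \<in> R i"
        unfolding row_tail_def by auto
      then have "r \<in> K"
        using fk_normal_formD(1)[OF fk] by auto
      then obtain i' where i': "i' < p" "r \<in> C i'"
        using fk_normal_formD(2)[OF fk] by auto
      have "\<not> i' < i"
        using fk_normal_formD(5)[OF fk _ i(2,3) i'(2)] diag \<open>r \<in> K\<close> by auto
      with i i' show "r \<in> col_tail j"
        unfolding col_tail_def by auto
    qed
    have "card (row_tail j) = (\<Sum>i\<in>{j..<p}. card (R i))"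
      unfolding row_tail_def by (rule card_UN_disjoint) (use fin fk_normal_formD(3)[OF fk] in auto)
    also have "\<dots> = (\<Sum>i\<in>{j..<p}. card (C i))"
      using card_eq by simp
    also have "\<dots> = card (col_tail j)"
      unfolding col_tail_def
      by (rule card_UN_disjoint[symmetric]) (use fin fk_normal_formD(3)[OF fk] in auto)
    finally show "card (row_tail j) = card (col_tail j)" .
  qed
  have "R j = row_tail j - row_tail (Suc j)" "C j = col_tail j - col_tail (Suc j)"
    using \<open>j < p\<close> fk_normal_formD(3)[OF fk]
    unfolding row_tail_def col_tail_def by (fastforce simp: Suc_le_eq)+
  then show ?thesis
    using tails_eq by simp
qed

lemma fk_normal_form_nonzero_entry_mono:
  assumes fk: "fk_normal_form M K p R C" and diag: "\<forall>r\<in>K. M r r \<noteq> 0"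
    and "M r c \<noteq> 0" "r \<in> R i" "c \<in> R i'" "i < p" "i' < p"
  shows "i \<le> i'"
proof (rule ccontr)
  assume "\<not> i \<le> i'"
  then have "i' < i"
    by simp
  have "c \<in> C i'"
    using fk_normal_form_rows_eq_cols[OF fk diag assms(7)] assms(5) by blast
  with \<open>M r c \<noteq> 0\<close> show False
    using fk_normal_formD(5)[OF fk \<open>i' < i\<close> assms(6,4)] by blast
qed

lemma jacobian_nonzero_iff: "jacobian E j l \<noteq> 0 \<longleftrightarrow> j = l \<or> (l, j) \<in> E"
proof -
  have "Poly_Mapping.lookup (indet v) (Poly_Mapping.single v 1) = 1" for v :: "'a \<times> 'a"
    unfolding indet_def by simp
  then have "indet v \<noteq> 0" for v :: "'a \<times> 'a"
    by (metis lookup_zero zero_neq_one)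
  then show ?thesis
    unfolding jacobian_def by simp
qed

lemma fk_normal_form_jacobian_upstream_mono:
  assumes fk: "fk_normal_form (jacobian E) K p R C"
    and upstream_closed: "E\<inverse> `` K \<subseteq> K"
    and "(x, y) \<in> E\<^sup>*" "y \<in> R j" "j < p"
  shows "\<exists>i. j \<le> i \<and> i < p \<and> x \<in> R i"
  using \<open>(x, y) \<in> E\<^sup>*\<close>
proof (induction rule: converse_rtrancl_induct)
  case base
  then show ?case
    using assms(4,5) by auto
next
  case (step a z)
  then obtain i where i: "j \<le> i" "i < p" "z \<in> R i"
    by blast
  then have "a \<in> K"
    using upstream_closed step(1) fk_normal_formD(1)[OF fk] by blast
  then obtain i' where i': "i' < p" "a \<in> R i'"
    using fk_normal_formD(1)[OF fk] by auto
  have "jacobian E z a \<noteq> 0" "\<forall>r\<in>K. jacobian E r r \<noteq> 0"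
    using step(1) by (simp_all add: jacobian_nonzero_iff)
  then have "i \<le> i'"
    using fk_normal_form_nonzero_entry_mono[OF fk] i i' by blast
  with i i' show ?case
    by (intro exI[of _ i']) auto
qed

lemma fk_normal_form_jacobian_cycle_same_block:
  assumes fk: "fk_normal_form (jacobian E) K p R C"
    and upstream_closed: "E\<inverse> `` K \<subseteq> K"
    and "(x, y) \<in> E\<^sup>*" "(y, x) \<in> E\<^sup>*" "y \<in> R j" "j < p"
  shows "x \<in> R j"
proof -
  obtain i where i: "j \<le> i" "i < p" "x \<in> R i"
    using fk_normal_form_jacobian_upstream_mono[OF fk upstream_closed assms(3,5,6)] by blast
  obtain i' where i': "i \<le> i'" "i' < p" "y \<in> R i'"
    using fk_normal_form_jacobian_upstream_mono[OF fk upstream_closed assms(4) i(3,2)] by blast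
  have "i' = j"
    using fk_normal_form_row_block_unique[OF fk i'(2) assms(6) i'(3) assms(5)] .
  with i i' show ?thesis
    by simp
qed

lemma vestigial_upstream_closed:
  assumes "E \<subseteq> V \<times> V"
  shows "E\<inverse> `` vestigial V E iota m \<subseteq> vestigial V E iota m"
proof
  fix a assume "a \<in> E\<inverse> `` vestigial V E iota m"
  then obtain b where "(a, b) \<in> E" and "(iota m, b) \<notin> E\<^sup>*"
    unfolding vestigial_def downstream_def by blast
  then show "a \<in> vestigial V E iota m"
    using assms unfolding vestigial_def downstream_def by (blast intro: rtrancl_into_rtrancl)
qed

theorem proposition3p8:
  fixes V :: "'a set" and E :: "('a \<times> 'a) set" and n :: nat and iota :: "nat \<Rightarrow> 'a"
    and out :: 'a and m :: nat and p :: nat and R C :: "nat \<Rightarrow> 'a set"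
  assumes "core_network V E n iota out"
    and "m \<in> {1..n}"
    and "vestigial V E iota m \<noteq> {}"
    and "fk_normal_form (jacobian E) (vestigial V E iota m) p R C"
  shows "\<forall>j<p. \<exists>v\<in>R j. \<exists>k\<in>{1..n}. k \<noteq> m \<and> input_simple E iota out k v"
proof (intro allI impI)
  fix j assume "j < p"
  note fk = assms(4)
  have "E \<subseteq> V \<times> V" and core: "\<forall>v\<in>V. downstream E v out \<and> (\<exists>k\<in>{1..n}. downstream E (iota k) v)"
    using assms(1) by (simp_all add: core_network_def io_network_def)
  from \<open>E \<subseteq> V \<times> V\<close> have upstream_closed: "E\<inverse> `` vestigial V E iota m \<subseteq> vestigial V E iota m"
    by (rule vestigial_upstream_closed)
  have "1 \<le> card (R j)"
    using fk_normal_formD(4)[OF fk \<open>j < p\<close>] unfolding fully_indecomposable_def by blast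
  then obtain v where v: "v \<in> R j"
    by fastforce
  then have v_vest: "v \<in> vestigial V E iota m"
    using fk_normal_formD(1)[OF fk] \<open>j < p\<close> by blast
  then obtain k where k: "k \<in> {1..n}" "(iota k, v) \<in> E\<^sup>*" "(v, out) \<in> E\<^sup>*"
    using core unfolding vestigial_def downstream_def by blast
  have "k \<noteq> m"
    using k(2) v_vest unfolding vestigial_def downstream_def by blast
  obtain xs x where "simple_path E xs" "hd xs = iota k" "last xs = out" "x \<in> set xs"
    and "(x, v) \<in> E\<^sup>*" "(v, x) \<in> E\<^sup>*"
    using simple_path_through_cycle[OF k(2,3)] .
  moreover from this have "x \<in> R j"
    using fk_normal_form_jacobian_cycle_same_block[OF fk upstream_closed] v \<open>j < p\<close> by blast
  ultimately show "\<exists>v\<in>R j. \<exists>k\<in>{1..n}. k \<noteq> m \<and> input_simple E iota out k v"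
    using k(1) \<open>k \<noteq> m\<close> unfolding input_simple_def by blast
qed

end
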